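(* Let $M$ be a matroid on a finite ground set $E$ with rank function $r$, and $k>0$ an integer. Then $\vec S_k$ is $\mathcal F_k$-separable: for all $\vec r,\vec r\,'\in\vec S_k$ with $\vec r\le\vec r\,'$ such that $\mathcal F_k$ forces neither $\vec r$ nor $\overleftarrow{r'}$, there is $(X,Y)\in\vec S_k$ that is $\mathcal F_k$-linked to $\vec r$ and such that $(Y,X)$ is $\mathcal F_k$-linked to $\overleftarrow{r'}$.
   Context: $\vec U$ is the set of all ordered bipartitions $(X,Y)$ of $E$ ($X\cup Y=E$, $X\cap Y=\emptyset$, parts possibly empty), a universe of separations with $(X,Y)\le(X',Y')$ iff $X\subseteq X'$, involution $(X,Y)^*=(Y,X)$, $(X,Y)\vee(X',Y')=(X\cup X',Y\cap Y')$, $(X,Y)\wedge(X',Y')=(X\cap X',Y\cup Y')$. Write $\overleftarrow s=\vec s^{\,*}$. Let $\lambda(X)=r(X)+r(E\setminus X)-r(M)$ and $\vec S_k=\{(X,Y)\in\vec U:\lambda(X)<k\}$, with separations $s=\{\vec s,\overleftarrow s\}$. A star is a nonempty $\sigma\subseteq\vec U$ with $\vec r\le\overleftarrow s$ for all distinct $\vec r,\vec s\in\sigma$. For a star $\sigma=\{(A_i,B_i):i=0,\dots,n\}$ (distinct elements) let $\langle\sigma\rangle=\sum_{i=0}^n r(B_i)-n\,r(M)$; $\mathcal F_k$ is the set of stars $\sigma\subseteq\vec U$ with $\langle\sigma\rangle<k$ (these are subsets of $\vec S_k$). $s$ is degenerate if $\vec s=\overleftarrow s$; $\vec r\in\vec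 S_k$ is trivial if some separation $s$ of $\vec S_k$ has $\vec r<\vec s$, $\vec r<\overleftarrow s$; $\mathcal F_k$ forces $\vec r$ if $\{\overleftarrow r\}\in\mathcal F_k$ or $r$ is degenerate (unforced elements are nontrivial and nondegenerate). For nontrivial nondegenerate $\vec r$, $\vec S_{\ge\vec r}$ is the set of all orientations of separations of $\vec S_k$ having an orientation $\ge\vec r$; for $\vec s_0\ge\vec r$ the shifting map $f:\vec S_{\ge\vec r}\to\vec U$ is $f(\vec s)=\vec s\vee\vec s_0$, $f(\overleftarrow s)=(\vec s\vee\vec s_0)^*$ for all $\vec s\in\vec S_{\ge\vec r}\setminus\{\overleftarrow r\}$ with $\vec s\ge\vec r$. $\vec s_0$ is linked to $\vec r$ if $\vec s_0\ge\vec r$ and $\vec s\vee\vec s_0\in\vec S_k$ for all $\vec s\in\vec S_k$ with $\vec s\ge\vec r$, $\vec s\ne\overleftarrow r$; it is $\mathcal F_k$-linked to $\vec r$ if moreover $f(\sigma)\in\mathcal F_k$ for every star $\sigma\in\mathcal F_k$ with $\sigma\subseteq\vec S_{\ge\vec r}\setminus\{\overleftarrow r\}$ having an element $\ge\vec r$. *)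

theory Defs
  imports Main
begin

definition matroid_rank :: "'a set \<Rightarrow> ('a set \<Rightarrow> nat) \<Rightarrow> bool" where
  "matroid_rank E r \<longleftrightarrow> finite E \<and>
     (\<forall>X. X \<subseteq> E \<longrightarrow> r X \<le> card X) \<and>
     (\<forall>X Y. X \<subseteq> Y \<and> Y \<subseteq> E \<longrightarrow> r X \<le> r Y) \<and>
     (\<forall>X Y. X \<subseteq> E \<and> Y \<subseteq> E \<longrightarrow> r (X \<union> Y) + r (X \<inter> Y) \<le> r X + r Y)"

type_synonym 'a sep = "'a set \<times> 'a set"

definition U :: "'a set \<Rightarrow> 'a sep set" where
  "U E = {(X, Y). X \<union> Y = E \<and> X \<inter> Y = {}}"

definition sle :: "'a sep \<Rightarrow> 'a sep \<Rightarrow> bool" where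
  "sle s t \<longleftrightarrow> fst s \<subseteq> fst t"

definition sless :: "'a sep \<Rightarrow> 'a sep \<Rightarrow> bool" where
  "sless s t \<longleftrightarrow> sle s t \<and> s \<noteq> t"

definition sinv :: "'a sep \<Rightarrow> 'a sep" where
  "sinv s = (snd s, fst s)"

definition sjoin :: "'a sep \<Rightarrow> 'a sep \<Rightarrow> 'a sep" where
  "sjoin s t = (fst s \<union> fst t, snd s \<inter> snd t)"

definition conn :: "'a set \<Rightarrow> ('a set \<Rightarrow> nat) \<Rightarrow> 'a set \<Rightarrow> int" where
  "conn E r X = int (r X) + int (r (E - X)) - int (r E)"

definition Sk :: "'a set \<Rightarrow> ('a set \<Rightarrow> nat) \<Rightarrow> int \<Rightarrow> 'a sep set" where
  "Sk E r k = {s \<in> U E. conn E r (fst s) < k}"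

definition is_star :: "'a set \<Rightarrow> 'a sep set \<Rightarrow> bool" where
  "is_star E \<sigma> \<longleftrightarrow> \<sigma> \<noteq> {} \<and> \<sigma> \<subseteq> U E \<and>
     (\<forall>s\<in>\<sigma>. \<forall>t\<in>\<sigma>. s \<noteq> t \<longrightarrow> sle s (sinv t))"

text \<open>Star order: sum of r(B_i) minus n r(M), where the star has n+1 elements.\<close>
definition star_order :: "'a set \<Rightarrow> ('a set \<Rightarrow> nat) \<Rightarrow> 'a sep set \<Rightarrow> int" where
  "star_order E r \<sigma> = (\<Sum>s\<in>\<sigma>. int (r (snd s))) - (int (card \<sigma>) - 1) * int (r E)"

definition Fk :: "'a set \<Rightarrow> ('a set \<Rightarrow> nat) \<Rightarrow> int \<Rightarrow> 'a sep set set" where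
  "Fk E r k = {\<sigma>. is_star E \<sigma> \<and> star_order E r \<sigma> < k}"

definition degenerate :: "'a sep \<Rightarrow> bool" where
  "degenerate s \<longleftrightarrow> s = sinv s"

definition trivial :: "'a set \<Rightarrow> ('a set \<Rightarrow> nat) \<Rightarrow> int \<Rightarrow> 'a sep \<Rightarrow> bool" where
  "trivial E r k x \<longleftrightarrow> (\<exists>s\<in>Sk E r k. sless x s \<and> sless x (sinv s))"

definition forces :: "'a set \<Rightarrow> ('a set \<Rightarrow> nat) \<Rightarrow> int \<Rightarrow> 'a sep \<Rightarrow> bool" where
  "forces E r k x \<longleftrightarrow> {sinv x} \<in> Fk E r k \<or> degenerate x"

definition S_ge :: "'a set \<Rightarrow> ('a set \<Rightarrow> nat) \<Rightarrow> int \<Rightarrow> 'a sep \<Rightarrow> 'a sep set" where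
  "S_ge E r k x = {s \<in> Sk E r k. sle x s \<or> sle x (sinv s)}"

definition shift :: "'a sep \<Rightarrow> 'a sep \<Rightarrow> 'a sep \<Rightarrow> 'a sep" where
  "shift x s0 t = (if sle x t \<and> t \<noteq> sinv x then sjoin t s0 else sinv (sjoin (sinv t) s0))"

definition linked :: "'a set \<Rightarrow> ('a set \<Rightarrow> nat) \<Rightarrow> int \<Rightarrow> 'a sep \<Rightarrow> 'a sep \<Rightarrow> bool" where
  "linked E r k s0 x \<longleftrightarrow> sle x s0 \<and>
     (\<forall>s\<in>Sk E r k. sle x s \<and> s \<noteq> sinv x \<longrightarrow> sjoin s s0 \<in> Sk E r k)"

definition F_linked :: "'a set \<Rightarrow> ('a set \<Rightarrow> nat) \<Rightarrow> int \<Rightarrow> 'a sep \<Rightarrow> 'a sep \<Rightarrow> bool" where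
  "F_linked E r k s0 x \<longleftrightarrow> linked E r k s0 x \<and>
     (\<forall>\<sigma>\<in>Fk E r k. \<sigma> \<subseteq> S_ge E r k x - {sinv x} \<and> (\<exists>s\<in>\<sigma>. sle x s)
        \<longrightarrow> shift x s0 ` \<sigma> \<in> Fk E r k)"

end

theory Submission
  imports Defs
begin

(* Given x <= x' with neither x nor x'* forced,
   choose s0 = (X,Y) of minimal order among all separations between x and x'.  Then s0 has
   minimal order among the separations between x and s0, and s0* has minimal order among those
   between x'* and s0*.  So it suffices to show: if x is unforced and s0 >= x has minimal order
   among the separations between x and s0, then s0 is F_k-linked to x.
   Linkedness follows from submodularity of the connectivity function.  For a star sigma with
   an element s1 >= x, the shifted star replaces s1 by s1 v s0 and every other t by
   (t* v s0)*; it is again a star, and its order does not exceed that of sigma.  The latter is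
   an iterated submodularity estimate for the ranks of the big sides (rank_sum_costar) combined
   with the minimality of s0 against X minus the small sides of the other elements of sigma. *)

section \<open>Bipartitions\<close>

lemma U_iff: "s \<in> U E \<longleftrightarrow> fst s \<union> snd s = E \<and> fst s \<inter> snd s = {}"
  by (cases s) (auto simp: U_def)

lemma sinv_U: "s \<in> U E \<Longrightarrow> sinv s \<in> U E"
  by (auto simp: U_iff sinv_def)

lemma sinv_sinv [simp]: "sinv (sinv s) = s"
  by (simp add: sinv_def)

lemma sle_sinv_iff: "s \<in> U E \<Longrightarrow> t \<in> U E \<Longrightarrow> sle (sinv s) (sinv t) \<longleftrightarrow> sle t s"
  by (auto simp: U_iff sle_def sinv_def)

lemma finite_U: "finite E \<Longrightarrow> finite (U E)"
  by (rule finite_subset[of _ "Pow E \<times> Pow E"]) (auto simp: U_def)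

lemma conn_sinv:
  assumes "s \<in> U E"
  shows "conn E r (fst (sinv s)) = conn E r (fst s)"
proof -
  have "E - snd s = fst s" "E - fst s = snd s"
    using assms by (auto simp: U_iff)
  then show ?thesis
    by (simp add: conn_def sinv_def add.commute)
qed

section \<open>The rank function\<close>

lemma rank_submod:
  "matroid_rank E r \<Longrightarrow> X \<subseteq> E \<Longrightarrow> Y \<subseteq> E \<Longrightarrow> r (X \<union> Y) + r (X \<inter> Y) \<le> r X + r Y"
  unfolding matroid_rank_def by blast

lemma rank_mono: "matroid_rank E r \<Longrightarrow> X \<subseteq> Y \<Longrightarrow> Y \<subseteq> E \<Longrightarrow> r X \<le> r Y"
  unfolding matroid_rank_def by blast

lemma rank_empty: "matroid_rank E r \<Longrightarrow> r {} = 0"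
  unfolding matroid_rank_def by (metis card.empty empty_subsetI le_zero_eq)

lemma conn_submod:
  assumes mr: "matroid_rank E r" and S: "S \<subseteq> E" and X: "X \<subseteq> E"
  shows "conn E r (S \<union> X) + conn E r (S \<inter> X) \<le> conn E r S + conn E r X"
proof -
  have "r (S \<union> X) + r (S \<inter> X) \<le> r S + r X"
    using rank_submod[OF mr S X] .
  moreover have "r ((E - S) \<union> (E - X)) + r ((E - S) \<inter> (E - X)) \<le> r (E - S) + r (E - X)"
    using rank_submod[OF mr, of "E - S" "E - X"] by auto
  moreover have "E - (S \<union> X) = (E - S) \<inter> (E - X)" "E - (S \<inter> X) = (E - S) \<union> (E - X)"
    by auto
  ultimately show ?thesis
    unfolding conn_def by simp
qed

lemma rank_sum_costar:
  assumes mr: "matroid_rank E r" and fin: "finite T"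
    and TU: "\<forall>t\<in>T. fst t \<subseteq> E \<and> snd t = E - fst t"
    and st: "\<forall>t\<in>T. \<forall>u\<in>T. t \<noteq> u \<longrightarrow> fst t \<subseteq> snd u"
    and W: "W \<subseteq> E"
  shows "(\<Sum>t\<in>T. r (snd t \<union> W)) + r (W - \<Union>(fst ` T)) \<le> (\<Sum>t\<in>T. r (snd t)) + r W"
  using fin TU st W
proof (induction T arbitrary: W rule: finite_induct)
  case empty
  then show ?case by simp
next
  case (insert t T)
  have t: "fst t \<subseteq> E" "snd t = E - fst t"
    using insert.prems by auto
  have IH: "(\<Sum>u\<in>T. r (snd u \<union> (W \<inter> snd t))) + r ((W \<inter> snd t) - \<Union>(fst ` T))
      \<le> (\<Sum>u\<in>T. r (snd u)) + r (W \<inter> snd t)"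
    using insert.IH[of "W \<inter> snd t"] insert.prems by auto
  have submod: "r (snd t \<union> W) + r (W \<inter> snd t) \<le> r (snd t) + r W"
    using rank_submod[OF mr, of "snd t" W] t insert.prems by (auto simp: Int_commute)
  text \<open>Since fst t lies in every other big side, intersecting W with snd t is invisible there.\<close>
  have "(\<Sum>u\<in>T. r (snd u \<union> (W \<inter> snd t))) = (\<Sum>u\<in>T. r (snd u \<union> W))"
  proof (rule sum.cong)
    fix u assume u: "u \<in> T"
    then have "fst t \<subseteq> snd u"
      using insert.prems insert.hyps by auto
    then have "snd u \<union> (W \<inter> snd t) = snd u \<union> W"
      using t insert.prems(3) by auto
    then show "r (snd u \<union> (W \<inter> snd t)) = r (snd u \<union> W)" by simp
  qed simp
  moreover have "(W \<inter> snd t) - \<Union>(fst ` T) = W - \<Union>(fst ` insert t T)"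
    using t insert.prems by auto
  ultimately show ?case
    using IH submod insert.hyps by simp
qed

section \<open>Stars and their orders\<close>

lemma star_order_sum:
  "finite \<sigma> \<Longrightarrow> star_order E r \<sigma> = (\<Sum>s\<in>\<sigma>. int (r (snd s)) - int (r E)) + int (r E)"
  by (simp add: star_order_def sum_subtractf algebra_simps)

lemma star_U: "is_star E \<sigma> \<Longrightarrow> s \<in> \<sigma> \<Longrightarrow> s \<in> U E"
  unfolding is_star_def by blast

lemma star_finite: "finite E \<Longrightarrow> is_star E \<sigma> \<Longrightarrow> finite \<sigma>"
  unfolding is_star_def using finite_subset[OF _ finite_U] by blast

lemma star_cross: "is_star E \<sigma> \<Longrightarrow> t \<in> \<sigma> \<Longrightarrow> u \<in> \<sigma> \<Longrightarrow> t \<noteq> u \<Longrightarrow> fst t \<subseteq> snd u"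
  by (auto simp: is_star_def sle_def sinv_def)

text \<open>A star indexed by \<sigma>: if \<phi> maps any two distinct indices to bipartitions pointing
  towards each other, the image is a star, and its order can be computed along the index set,
  since two indices with the same image give the trivial bipartition (\<emptyset>, E) of defect 0.\<close>
lemma star_image:
  assumes fin: "finite \<sigma>" and ne: "\<sigma> \<noteq> {}" and \<phi>U: "\<phi> ` \<sigma> \<subseteq> U E"
    and cross: "\<And>t u. t \<in> \<sigma> \<Longrightarrow> u \<in> \<sigma> \<Longrightarrow> t \<noteq> u \<Longrightarrow> fst (\<phi> t) \<subseteq> snd (\<phi> u)"
  shows "is_star E (\<phi> ` \<sigma>)"
    and "star_order E r (\<phi> ` \<sigma>) = (\<Sum>t\<in>\<sigma>. int (r (snd (\<phi> t))) - int (r E)) + int (r E)"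
proof -
  show "is_star E (\<phi> ` \<sigma>)"
    unfolding is_star_def
  proof (intro conjI ballI impI)
    fix p q assume "p \<in> \<phi> ` \<sigma>" "q \<in> \<phi> ` \<sigma>" "p \<noteq> q"
    then obtain t u where "t \<in> \<sigma>" "u \<in> \<sigma>" "t \<noteq> u" "p = \<phi> t" "q = \<phi> u"
      by blast
    then show "sle p (sinv q)"
      using cross by (simp add: sle_def sinv_def)
  qed (use ne \<phi>U in auto)
  let ?H = "\<lambda>s. int (r (snd s)) - int (r E)"
  have "sum ?H (\<phi> ` \<sigma>) = sum (?H \<circ> \<phi>) \<sigma>"
  proof (rule sum.reindex_nontrivial[OF fin])
    fix t u assume t: "t \<in> \<sigma>" and u: "u \<in> \<sigma>" and "t \<noteq> u" and same: "\<phi> t = \<phi> u"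
    then have "fst (\<phi> t) \<subseteq> snd (\<phi> t)"
      using cross[of t u] by simp
    moreover have "\<phi> t \<in> U E"
      using \<phi>U t by auto
    ultimately have "snd (\<phi> t) = E"
      by (auto simp: U_iff)
    then show "?H (\<phi> t) = 0" by simp
  qed
  then show "star_order E r (\<phi> ` \<sigma>) = (\<Sum>t\<in>\<sigma>. ?H (\<phi> t)) + int (r E)"
    using star_order_sum[of "\<phi> ` \<sigma>"] fin by simp
qed

definition star_shift :: "'a sep \<Rightarrow> 'a sep \<Rightarrow> 'a sep \<Rightarrow> 'a sep" where
  "star_shift s1 s0 t = (if t = s1 then sjoin t s0 else sinv (sjoin (sinv t) s0))"

lemma star_shift_U: "t \<in> U E \<Longrightarrow> s0 \<in> U E \<Longrightarrow> star_shift s1 s0 t \<in> U E"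
  by (cases s0) (auto simp: star_shift_def sjoin_def sinv_def U_iff)

lemma star_shift_cross:
  assumes "is_star E \<sigma>" "s1 \<in> \<sigma>" "t \<in> \<sigma>" "u \<in> \<sigma>" "t \<noteq> u"
  shows "fst (star_shift s1 s0 t) \<subseteq> snd (star_shift s1 s0 u)"
proof -
  have "fst t \<subseteq> snd u" "t \<noteq> s1 \<Longrightarrow> fst t \<subseteq> snd s1" "u \<noteq> s1 \<Longrightarrow> fst s1 \<subseteq> snd u"
    using star_cross[OF assms(1)] assms(2-5) by auto
  then show ?thesis
    using assms(5) by (auto simp: star_shift_def sjoin_def sinv_def)
qed

lemma star_shift_rank_sum:
  assumes mr: "matroid_rank E r" and star: "is_star E \<sigma>" and s1: "s1 \<in> \<sigma>"
    and s0U: "(X0, Y0) \<in> U E"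
    and minimal: "conn E r X0 \<le> conn E r (X0 - \<Union>(fst ` (\<sigma> - {s1})))"
  shows "(\<Sum>t\<in>\<sigma>. r (snd (star_shift s1 (X0, Y0) t))) \<le> (\<Sum>t\<in>\<sigma>. r (snd t))"
proof -
  define \<tau> where "\<tau> = \<sigma> - {s1}"
  define C where "C = \<Union>(fst ` \<tau>)"
  have finE: "finite E"
    using mr by (simp add: matroid_rank_def)
  have fin\<tau>: "finite \<tau>"
    using star_finite[OF finE star] by (simp add: \<tau>_def)
  have \<sigma>: "\<sigma> = insert s1 \<tau>" "s1 \<notin> \<tau>"
    using s1 by (auto simp: \<tau>_def)
  have \<sigma>U: "\<sigma> \<subseteq> U E"
    using star by (simp add: is_star_def)
  have \<tau>U: "\<forall>t\<in>\<tau>. fst t \<subseteq> E \<and> snd t = E - fst t"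
  proof
    fix t assume "t \<in> \<tau>"
    then have "t \<in> U E"
      using \<sigma>U by (auto simp: \<tau>_def)
    then show "fst t \<subseteq> E \<and> snd t = E - fst t"
      unfolding U_iff by blast
  qed
  have \<tau>_cross: "\<forall>t\<in>\<tau>. \<forall>u\<in>\<tau>. t \<noteq> u \<longrightarrow> fst t \<subseteq> snd u"
    unfolding \<tau>_def using star_cross[OF star] by blast
  have CB1: "C \<subseteq> snd s1"
    unfolding C_def \<tau>_def using star_cross[OF star _ s1] by blast
  have XY0: "X0 \<subseteq> E" "Y0 \<subseteq> E" "E - X0 = Y0"
    using s0U by (auto simp: U_def)
  have "s1 \<in> U E"
    using \<sigma>U s1 by blast
  then have B1: "snd s1 \<subseteq> E" "C \<subseteq> E"
    using CB1 unfolding U_iff by blast+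
  have "(\<Sum>t\<in>\<tau>. r (snd (star_shift s1 (X0, Y0) t))) = (\<Sum>t\<in>\<tau>. r (snd t \<union> X0))"
    using \<sigma>(2) by (intro sum.cong) (auto simp: star_shift_def sjoin_def sinv_def)
  then have shifted: "(\<Sum>t\<in>\<sigma>. r (snd (star_shift s1 (X0, Y0) t)))
      = r (snd s1 \<inter> Y0) + (\<Sum>t\<in>\<tau>. r (snd t \<union> X0))"
    using fin\<tau> \<sigma> by (simp add: star_shift_def sjoin_def)
  text \<open>Combine submodularity for s1 with Y0, the costar estimate for the other elements with
    X0, and minimality of X0 against X0 - C, where C \<subseteq> snd s1 gives monotonicity.\<close>
  have submod: "r (snd s1 \<union> Y0) + r (snd s1 \<inter> Y0) \<le> r (snd s1) + r Y0"
    using rank_submod[OF mr B1(1) XY0(2)] .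
  have costar: "(\<Sum>t\<in>\<tau>. r (snd t \<union> X0)) + r (X0 - C) \<le> (\<Sum>t\<in>\<tau>. r (snd t)) + r X0"
    unfolding C_def using rank_sum_costar[OF mr fin\<tau> \<tau>U \<tau>_cross XY0(1)] .
  have "E - (X0 - C) = Y0 \<union> C"
    using XY0 B1 by auto
  then have min_rank: "int (r X0) + int (r Y0) \<le> int (r (X0 - C)) + int (r (Y0 \<union> C))"
    using minimal XY0(3) by (simp add: conn_def C_def \<tau>_def)
  have mono: "r (Y0 \<union> C) \<le> r (snd s1 \<union> Y0)"
    using CB1 B1 XY0 by (intro rank_mono[OF mr]) auto
  have "(\<Sum>t\<in>\<sigma>. r (snd t)) = r (snd s1) + (\<Sum>t\<in>\<tau>. r (snd t))"
    using fin\<tau> \<sigma> by simp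
  then show ?thesis
    unfolding shifted using submod costar min_rank mono by linarith
qed

section \<open>Separations of minimal order and linkedness\<close>

definition order_minimal_between ::
    "'a set \<Rightarrow> ('a set \<Rightarrow> nat) \<Rightarrow> 'a sep \<Rightarrow> 'a sep \<Rightarrow> 'a sep \<Rightarrow> bool" where
  "order_minimal_between E r x y s \<longleftrightarrow> s \<in> U E \<and> sle x s \<and> sle s y \<and>
     (\<forall>u\<in>U E. sle x u \<and> sle u y \<longrightarrow> conn E r (fst s) \<le> conn E r (fst u))"

lemma order_minimal_exists:
  assumes "finite E" "x \<in> U E" "sle x y"
  shows "\<exists>s. order_minimal_between E r x y s"
proof -
  let ?A = "{u \<in> U E. sle x u \<and> sle u y}"
  have "finite ?A"
    using finite_U[OF assms(1)] by simp
  moreover have "x \<in> ?A"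
    using assms(2,3) by (simp add: sle_def)
  ultimately obtain s where "is_arg_min (\<lambda>u. conn E r (fst u)) (\<lambda>u. u \<in> ?A) s"
    using ex_is_arg_min_if_finite[of ?A] by blast
  then have "s \<in> ?A" "\<forall>u\<in>?A. conn E r (fst s) \<le> conn E r (fst u)"
    by (auto simp: is_arg_min_linorder)
  then have "order_minimal_between E r x y s"
    unfolding order_minimal_between_def by blast
  then show ?thesis ..
qed

lemma order_minimal_restrict:
  "order_minimal_between E r x y s \<Longrightarrow> order_minimal_between E r x s s"
  unfolding order_minimal_between_def sle_def by (meson order_refl order_trans)

text \<open>Inversion maps the bipartitions between x and y onto those between y* and x*,
  preserving their orders.\<close>
lemma order_minimal_sinv:
  assumes xU: "x \<in> U E" and yU: "y \<in> U E" and min: "order_minimal_between E r x y s"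
  shows "order_minimal_between E r (sinv y) (sinv x) (sinv s)"
proof -
  have sU: "s \<in> U E" and xs: "sle x s" and sy: "sle s y"
    using min by (auto simp: order_minimal_between_def)
  have "conn E r (fst (sinv s)) \<le> conn E r (fst u)"
    if uU: "u \<in> U E" and yu: "sle (sinv y) u" and ux: "sle u (sinv x)" for u
  proof -
    have "sle x (sinv u)" "sle (sinv u) y"
      using sle_sinv_iff[OF yU sinv_U[OF uU]] sle_sinv_iff[OF sinv_U[OF uU] xU] yu ux by auto
    then have "conn E r (fst s) \<le> conn E r (fst (sinv u))"
      using min sinv_U[OF uU] by (auto simp: order_minimal_between_def)
    then show ?thesis
      using conn_sinv[OF sU] conn_sinv[OF uU] by simp
  qed
  then show ?thesis
    using sle_sinv_iff[OF yU sU] sle_sinv_iff[OF sU xU] sinv_U[OF sU] xs sy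
    unfolding order_minimal_between_def by blast
qed

text \<open>A minimal-order s0 above x is linked to x: for s \<ge> x, submodularity gives
  \<lambda>(s \<or> s0) \<le> \<lambda>(s) + \<lambda>(s0) - \<lambda>(s \<and> s0) \<le> \<lambda>(s), as x \<le> s \<and> s0 \<le> s0.\<close>
lemma linked_if_minimal:
  assumes mr: "matroid_rank E r" and min: "order_minimal_between E r x s0 s0"
  shows "linked E r k s0 x"
  unfolding linked_def
proof (intro conjI ballI impI)
  obtain X0 Y0 where s0: "s0 = (X0, Y0)"
    by (cases s0)
  have s0U: "X0 \<union> Y0 = E" "X0 \<inter> Y0 = {}"
    using min s0 by (auto simp: order_minimal_between_def U_def)
  show "sle x s0"
    using min by (simp add: order_minimal_between_def)
  fix s assume sS: "s \<in> Sk E r k" and "sle x s \<and> s \<noteq> sinv x"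
  then have xs: "fst x \<subseteq> fst s"
    by (simp add: sle_def)
  have sU: "fst s \<union> snd s = E" "fst s \<inter> snd s = {}" and sk: "conn E r (fst s) < k"
    using sS by (auto simp: Sk_def U_iff)
  have "(fst s \<inter> X0, snd s \<union> Y0) \<in> U E"
    using sU s0U by (auto simp: U_def)
  then have "conn E r X0 \<le> conn E r (fst s \<inter> X0)"
    using min xs s0 unfolding order_minimal_between_def sle_def by fastforce
  moreover have "conn E r (fst s \<union> X0) + conn E r (fst s \<inter> X0) \<le> conn E r (fst s) + conn E r X0"
    using conn_submod[OF mr, of "fst s" X0] sU s0U by auto
  moreover have "sjoin s s0 \<in> U E"
    using sU s0U s0 by (auto simp: sjoin_def U_def)
  ultimately show "sjoin s s0 \<in> Sk E r k"
    using sk s0 by (simp add: Sk_def sjoin_def)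
qed

text \<open>If fst x = \<emptyset> then {x*} = {(E, \<emptyset>)} is a star of order r(\<emptyset>) = 0 < k, so x is forced.
  Hence an unforced x has a nonempty small side.\<close>
lemma unforced_nonempty:
  assumes mr: "matroid_rank E r" and k: "k > 0" and xU: "x \<in> U E"
    and unforced: "\<not> forces E r k x"
  shows "fst x \<noteq> {}"
proof
  assume empty: "fst x = {}"
  then have "sinv x = (E, {})"
    using xU by (auto simp: sinv_def U_iff)
  then have "{sinv x} \<in> Fk E r k"
    using k rank_empty[OF mr] by (simp add: Fk_def is_star_def star_order_def U_def)
  then show False
    using unforced by (simp add: forces_def)
qed

lemma star_unique_above:
  assumes star: "is_star E \<sigma>" and s: "s \<in> \<sigma>" "sle x s" and t: "t \<in> \<sigma>" "sle x t"
    and nonempty: "fst x \<noteq> {}"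
  shows "t = s"
proof (rule ccontr)
  assume "t \<noteq> s"
  then have "fst x \<subseteq> snd s"
    using star_cross[OF star t(1) s(1)] t(2) by (auto simp: sle_def)
  moreover have "fst s \<inter> snd s = {}"
    using star_U[OF star s(1)] by (simp add: U_iff)
  ultimately show False
    using s(2) nonempty by (auto simp: sle_def)
qed

lemma shift_image_eq:
  assumes star: "is_star E \<sigma>" and s1: "s1 \<in> \<sigma>" "sle x s1" "s1 \<noteq> sinv x"
    and nonempty: "fst x \<noteq> {}"
  shows "shift x s0 ` \<sigma> = star_shift s1 s0 ` \<sigma>"
proof (rule image_cong[OF refl])
  fix t assume t: "t \<in> \<sigma>"
  show "shift x s0 t = star_shift s1 s0 t"
  proof (cases "t = s1")
    case True
    then show ?thesis
      using s1 by (simp add: shift_def star_shift_def)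
  next
    case False
    then have "\<not> sle x t"
      using star_unique_above[OF star s1(1,2) t _ nonempty] by blast
    then show ?thesis
      using False by (simp add: shift_def star_shift_def)
  qed
qed

lemma F_linked_if_minimal:
  assumes mr: "matroid_rank E r" and k: "k > 0" and xU: "x \<in> U E"
    and unforced: "\<not> forces E r k x" and min: "order_minimal_between E r x s0 s0"
  shows "F_linked E r k s0 x"
  unfolding F_linked_def
proof (intro conjI ballI impI)
  show "linked E r k s0 x"
    using linked_if_minimal[OF mr min] .
  fix \<sigma> assume \<sigma>F: "\<sigma> \<in> Fk E r k" and \<sigma>_ge: "\<sigma> \<subseteq> S_ge E r k x - {sinv x} \<and> (\<exists>s\<in>\<sigma>. sle x s)"
  obtain s1 where s1: "s1 \<in> \<sigma>" "sle x s1" "s1 \<noteq> sinv x"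
    using \<sigma>_ge by blast
  have star: "is_star E \<sigma>" and order: "star_order E r \<sigma> < k"
    using \<sigma>F by (auto simp: Fk_def)
  have fin: "finite \<sigma>"
    using star_finite[OF _ star] mr by (simp add: matroid_rank_def)
  have ne: "\<sigma> \<noteq> {}"
    using s1(1) by blast
  have nonempty: "fst x \<noteq> {}"
    using unforced_nonempty[OF mr k xU unforced] .
  obtain X0 Y0 where s0: "s0 = (X0, Y0)"
    by (cases s0)
  have s0U: "(X0, Y0) \<in> U E" and xX0: "fst x \<subseteq> X0"
    using min s0 by (auto simp: order_minimal_between_def sle_def)
  let ?\<phi> = "star_shift s1 s0"
  have \<phi>U: "?\<phi> ` \<sigma> \<subseteq> U E"
    using star_shift_U[OF star_U[OF star] s0U] s0 by blast
  have cross: "\<And>t u. t \<in> \<sigma> \<Longrightarrow> u \<in> \<sigma> \<Longrightarrow> t \<noteq> u \<Longrightarrow> fst (?\<phi> t) \<subseteq> snd (?\<phi> u)"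
    using star_shift_cross[OF star s1(1)] by blast
  text \<open>Removing the small sides of the other elements from X0 keeps us above x, since they
    lie in the big side of s1; so by minimality the order does not drop.\<close>
  define C where "C = \<Union>(fst ` (\<sigma> - {s1}))"
  have "C \<subseteq> snd s1"
    unfolding C_def using star_cross[OF star _ s1(1)] by blast
  then have "(X0 - C, Y0 \<union> C) \<in> U E" "sle x (X0 - C, Y0 \<union> C)" "sle (X0 - C, Y0 \<union> C) s0"
    using s0 s0U xX0 s1(2) star_U[OF star s1(1)] by (auto simp: U_iff sle_def)
  then have "conn E r (fst s0) \<le> conn E r (fst (X0 - C, Y0 \<union> C))"
    using min unfolding order_minimal_between_def by blast
  then have "conn E r X0 \<le> conn E r (X0 - C)"
    using s0 by simp
  then have "(\<Sum>t\<in>\<sigma>. r (snd (?\<phi> t))) \<le> (\<Sum>t\<in>\<sigma>. r (snd t))"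
    unfolding s0 C_def using star_shift_rank_sum[OF mr star s1(1) s0U] by blast
  then have "(\<Sum>t\<in>\<sigma>. int (r (snd (?\<phi> t)))) \<le> (\<Sum>t\<in>\<sigma>. int (r (snd t)))"
    by (simp only: of_nat_sum[symmetric] of_nat_le_iff)
  moreover have "star_order E r (?\<phi> ` \<sigma>) = (\<Sum>t\<in>\<sigma>. int (r (snd (?\<phi> t))) - int (r E)) + int (r E)"
    by (rule star_image(2)[OF fin ne \<phi>U cross])
  ultimately have "star_order E r (?\<phi> ` \<sigma>) \<le> star_order E r \<sigma>"
    using star_order_sum[OF fin, of E r] by (simp add: sum_subtractf)
  moreover have "shift x s0 ` \<sigma> = ?\<phi> ` \<sigma>"
    using shift_image_eq[OF star s1 nonempty] .
  ultimately show "shift x s0 ` \<sigma> \<in> Fk E r k"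
    using star_image(1)[OF fin ne \<phi>U cross] order unfolding Fk_def by simp
qed

theorem lemma5p15:
  fixes E :: "'a set" and r :: "'a set \<Rightarrow> nat" and k :: int
  assumes "matroid_rank E r" and "k > 0"
  shows "\<forall>x\<in>Sk E r k. \<forall>x'\<in>Sk E r k.
           sle x x' \<and> \<not> forces E r k x \<and> \<not> forces E r k (sinv x') \<longrightarrow>
           (\<exists>X Y. (X, Y) \<in> Sk E r k \<and> F_linked E r k (X, Y) x \<and> F_linked E r k (Y, X) (sinv x'))"
proof (intro ballI impI)
  fix x x' assume xS: "x \<in> Sk E r k" and x'S: "x' \<in> Sk E r k"
    and h: "sle x x' \<and> \<not> forces E r k x \<and> \<not> forces E r k (sinv x')"
  have xU: "x \<in> U E" and x'U: "x' \<in> U E"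
    using xS x'S by (auto simp: Sk_def)
  obtain s0 where min: "order_minimal_between E r x x' s0"
    using order_minimal_exists[of E x x' r] assms(1) xU h by (auto simp: matroid_rank_def)
  have s0U: "s0 \<in> U E" and "conn E r (fst s0) \<le> conn E r (fst x)"
    using min xU h by (auto simp: order_minimal_between_def sle_def)
  then have "s0 \<in> Sk E r k"
    using xS by (simp add: Sk_def)
  moreover have "F_linked E r k s0 x"
    using F_linked_if_minimal[OF assms xU] order_minimal_restrict[OF min] h by blast
  moreover have "F_linked E r k (sinv s0) (sinv x')"
    using F_linked_if_minimal[OF assms sinv_U[OF x'U]]
      order_minimal_restrict[OF order_minimal_sinv[OF xU x'U min]] h by blast
  ultimately show "\<exists>X Y. (X, Y) \<in> Sk E r k \<and> F_linked E r k (X, Y) x \<and> F_linked E r k (Y, X) (sinv x')"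
    by (cases s0) (auto simp: sinv_def)
qed

end
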